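(* Let $\mathcal{A}=\{A_1,\dots,A_J\}$ be a partition of $\mathcal{X}$ with $\pi_k[A_j]>0$ for all $k,j$. For every $i,j\in\{1,\dots,J\}$ and every $k\in\{0,\dots,N-1\}$, $$\frac{\int_{A_i}\int_{A_j}\min\{\pi_k(z)\pi_{k+1}(w),\,\pi_k(w)\pi_{k+1}(z)\}\,\lambda(dw)\,\lambda(dz)}{\pi_k[A_i]\,\pi_{k+1}[A_j]}\;\ge\;\delta(\mathcal{A})^2.$$
   Context: $(\mathcal{X},\mathcal{F},\lambda)$ is a measure space; $N\ge1$; $\pi_0,\dots,\pi_N$ are probability densities w.r.t. $\lambda$, and $\pi_k[A]=\int_A\pi_k\,d\lambda$. Overlap: $\delta(\mathcal{A})=\min_{|k-l|=1,\ j\in\{1,\dots,J\}}\frac{1}{\pi_k[A_j]}\int_{A_j}\min\{\pi_k(z),\pi_l(z)\}\lambda(dz)$, where $k,l$ range over $\{0,\dots,N\}$. (The left-hand side is the stationary probability of accepting a proposed swap between levels $k$ and $k+1$ given $x_{[k]}\in A_i$, $x_{[k+1]}\in A_j$.) *)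

theory Defs
  imports "HOL-Analysis.Analysis"
begin

definition dmass :: "'a measure \<Rightarrow> ('a \<Rightarrow> real) \<Rightarrow> 'a set \<Rightarrow> ennreal" where
  "dmass M p A = (\<integral>\<^sup>+ z \<in> A. ennreal (p z) \<partial>M)"

definition overlap :: "'a measure \<Rightarrow> (nat \<Rightarrow> 'a \<Rightarrow> real) \<Rightarrow> nat \<Rightarrow> (nat \<Rightarrow> 'a set) \<Rightarrow> nat \<Rightarrow> ennreal" where
  "overlap M \<pi> N A J =
     Min {(\<integral>\<^sup>+ z \<in> A j. ennreal (min (\<pi> k z) (\<pi> l z)) \<partial>M) / dmass M (\<pi> k) (A j) | k l j.
           k \<le> N \<and> l \<le> N \<and> (l = k + 1 \<or> k = l + 1) \<and> j \<in> {1..J}}"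

end

theory Submission
  imports Defs
begin

(* Write m(z) = min(pi_k z, pi_(k+1) z).  For nonnegative densities the
   pointwise bound  m(z) m(w) <= min(pi_k z pi_(k+1) w, pi_k w pi_(k+1) z)  holds, so
   the double integral over A_i x A_j dominates the product
   (int_{A_i} m) (int_{A_j} m).  Dividing by pi_k[A_i] pi_(k+1)[A_j] splits this
   product into two overlap ratios, one for the pair of levels (k, k+1) on A_i and
   one for (k+1, k) on A_j; each is at least delta(A), the minimum of all such ratios. *)

lemma min_mult_min_le_cross:
  fixes a b c d :: real
  assumes "0 \<le> a" "0 \<le> b" "0 \<le> c" "0 \<le> d"
  shows "min a b * min c d \<le> min (a * d) (c * b)"
proof (rule min.boundedI)
  show "min a b * min c d \<le> a * d"
    using assms by (intro mult_mono) auto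
  have "min a b * min c d \<le> b * c"
    using assms by (intro mult_mono) auto
  then show "min a b * min c d \<le> c * b"
    by (simp add: mult.commute)
qed

lemma nn_integral_set_product:
  fixes f :: "'a \<Rightarrow> ennreal"
  assumes f: "f \<in> borel_measurable M" and A: "A \<in> sets M" and B: "B \<in> sets M"
  shows "(\<integral>\<^sup>+ z \<in> A. (\<integral>\<^sup>+ w \<in> B. f z * f w \<partial>M) \<partial>M)
       = (\<integral>\<^sup>+ z \<in> A. f z \<partial>M) * (\<integral>\<^sup>+ w \<in> B. f w \<partial>M)"
proof -
  have inner: "(\<integral>\<^sup>+ w \<in> B. f z * f w \<partial>M) = f z * (\<integral>\<^sup>+ w \<in> B. f w \<partial>M)" for z
  proof -
    have "(\<integral>\<^sup>+ w. f z * (f w * indicator B w) \<partial>M) = f z * (\<integral>\<^sup>+ w. f w * indicator B w \<partial>M)"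
      by (rule nn_integral_cmult) (use f B in measurable)
    then show ?thesis by (simp add: mult.assoc)
  qed
  have "(\<integral>\<^sup>+ z \<in> A. f z * (\<integral>\<^sup>+ w \<in> B. f w \<partial>M) \<partial>M)
      = (\<integral>\<^sup>+ z. (f z * indicator A z) * (\<integral>\<^sup>+ w \<in> B. f w \<partial>M) \<partial>M)"
    by (simp add: ac_simps)
  also have "\<dots> = (\<integral>\<^sup>+ z \<in> A. f z \<partial>M) * (\<integral>\<^sup>+ w \<in> B. f w \<partial>M)"
    by (rule nn_integral_multc) (use f A in measurable)
  finally show ?thesis by (simp add: inner)
qed

lemma swap_integral_ge_overlap_product:
  fixes p q :: "'a \<Rightarrow> real"
  assumes p: "p \<in> borel_measurable M" and q: "q \<in> borel_measurable M"
    and nonneg: "\<And>x. x \<in> space M \<Longrightarrow> 0 \<le> p x \<and> 0 \<le> q x"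
    and A: "A \<in> sets M" and B: "B \<in> sets M"
  shows "(\<integral>\<^sup>+ z \<in> A. ennreal (min (p z) (q z)) \<partial>M) * (\<integral>\<^sup>+ w \<in> B. ennreal (min (p w) (q w)) \<partial>M)
       \<le> (\<integral>\<^sup>+ z \<in> A. (\<integral>\<^sup>+ w \<in> B. ennreal (min (p z * q w) (p w * q z)) \<partial>M) \<partial>M)"
proof -
  define m where "m z = ennreal (min (p z) (q z))" for z
  have m_meas: "m \<in> borel_measurable M"
    unfolding m_def using p q by measurable
  have pointwise: "m z * m w \<le> ennreal (min (p z * q w) (p w * q z))"
    if "z \<in> space M" "w \<in> space M" for z w
  proof -
    have "min (p z) (q z) * min (p w) (q w) \<le> min (p z * q w) (p w * q z)"
      using nonneg[OF that(1)] nonneg[OF that(2)] by (intro min_mult_min_le_cross) auto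
    then show ?thesis
      unfolding m_def using nonneg[OF that(1)] nonneg[OF that(2)]
      by (simp add: ennreal_mult'[symmetric] ennreal_leI)
  qed
  have "(\<integral>\<^sup>+ z \<in> A. m z \<partial>M) * (\<integral>\<^sup>+ w \<in> B. m w \<partial>M)
      = (\<integral>\<^sup>+ z \<in> A. (\<integral>\<^sup>+ w \<in> B. m z * m w \<partial>M) \<partial>M)"
    by (rule nn_integral_set_product[OF m_meas A B, symmetric])
  also have "\<dots> \<le> (\<integral>\<^sup>+ z \<in> A. (\<integral>\<^sup>+ w \<in> B. ennreal (min (p z * q w) (p w * q z)) \<partial>M) \<partial>M)"
    using pointwise
    by (intro nn_integral_mono mult_right_mono) (auto split: split_indicator)
  finally show ?thesis unfolding m_def .
qed

lemma dmass_finite: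
  assumes "(\<integral>\<^sup>+ x. ennreal (p x) \<partial>M) = 1"
  shows "dmass M p S < \<infinity>"
proof -
  have "dmass M p S \<le> (\<integral>\<^sup>+ x. ennreal (p x) \<partial>M)"
    unfolding dmass_def by (intro nn_integral_mono) (auto split: split_indicator)
  with assms show ?thesis by (simp add: order_le_less_trans)
qed

lemma overlap_le_ratio:
  assumes "k \<le> N" "l \<le> N" "l = k + 1 \<or> k = l + 1" "j \<in> {1..J}"
  shows "overlap M \<pi> N A J
         \<le> (\<integral>\<^sup>+ z \<in> A j. ennreal (min (\<pi> k z) (\<pi> l z)) \<partial>M) / dmass M (\<pi> k) (A j)"
proof -
  define r where "r = (\<lambda>(k, l, j). (\<integral>\<^sup>+ z \<in> A j. ennreal (min (\<pi> k z) (\<pi> l z)) \<partial>M)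
                                    / dmass M (\<pi> k) (A j))"
  define S where "S = {(\<integral>\<^sup>+ z \<in> A j. ennreal (min (\<pi> k z) (\<pi> l z)) \<partial>M) / dmass M (\<pi> k) (A j)
                       | k l j. k \<le> N \<and> l \<le> N \<and> (l = k + 1 \<or> k = l + 1) \<and> j \<in> {1..J}}"
  have "S \<subseteq> r ` ({..N} \<times> {..N} \<times> {1..J})"
  proof
    fix x assume "x \<in> S"
    then obtain k' l' j' where "x = r (k', l', j')" "k' \<le> N" "l' \<le> N" "j' \<in> {1..J}"
      unfolding S_def r_def by auto
    then show "x \<in> r ` ({..N} \<times> {..N} \<times> {1..J})" by auto
  qed
  then have "finite S" by (rule finite_subset) auto
  moreover have "r (k, l, j) \<in> S"
    unfolding S_def r_def using assms by (simp only: prod.case) blast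
  ultimately have "Min S \<le> r (k, l, j)" by (rule Min_le)
  then show ?thesis unfolding overlap_def S_def r_def by simp
qed

lemma ennreal_divide_times_divide:
  fixes a b P Q :: ennreal
  assumes "P < \<infinity>" "Q < \<infinity>"
  shows "(a / P) * (b / Q) = (a * b) / (P * Q)"
  unfolding divide_ennreal_def using assms by (simp add: ennreal_inverse_mult ac_simps)

theorem mainTheorem5:
  fixes M :: "'a measure" and \<pi> :: "nat \<Rightarrow> 'a \<Rightarrow> real" and N J :: nat
    and A :: "nat \<Rightarrow> 'a set"
  assumes N_pos: "N \<ge> 1"
    and dens_meas: "\<And>k. k \<le> N \<Longrightarrow> \<pi> k \<in> borel_measurable M"
    and dens_nonneg: "\<And>k x. k \<le> N \<Longrightarrow> x \<in> space M \<Longrightarrow> \<pi> k x \<ge> 0"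
    and dens_prob: "\<And>k. k \<le> N \<Longrightarrow> (\<integral>\<^sup>+ x. ennreal (\<pi> k x) \<partial>M) = 1"
    and J_pos: "J \<ge> 1"
    and A_sets: "\<And>j. j \<in> {1..J} \<Longrightarrow> A j \<in> sets M"
    and A_disj: "disjoint_family_on A {1..J}"
    and A_cover: "(\<Union>j\<in>{1..J}. A j) = space M"
    and A_pos: "\<And>k j. k \<le> N \<Longrightarrow> j \<in> {1..J} \<Longrightarrow> dmass M (\<pi> k) (A j) > 0"
    and ij: "i \<in> {1..J}" "j \<in> {1..J}"
    and k: "k < N"
  shows "(\<integral>\<^sup>+ z \<in> A i. (\<integral>\<^sup>+ w \<in> A j.
            ennreal (min (\<pi> k z * \<pi> (Suc k) w) (\<pi> k w * \<pi> (Suc k) z)) \<partial>M) \<partial>M)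
          / (dmass M (\<pi> k) (A i) * dmass M (\<pi> (Suc k)) (A j))
         \<ge> (overlap M \<pi> N A J)\<^sup>2"
proof -
  have k_le: "k \<le> N" "Suc k \<le> N" using k by auto
  define a where "a = (\<integral>\<^sup>+ z \<in> A i. ennreal (min (\<pi> k z) (\<pi> (Suc k) z)) \<partial>M)"
  define b where "b = (\<integral>\<^sup>+ w \<in> A j. ennreal (min (\<pi> (Suc k) w) (\<pi> k w)) \<partial>M)"
  define P where "P = dmass M (\<pi> k) (A i)"
  define Q where "Q = dmass M (\<pi> (Suc k)) (A j)"
  have "overlap M \<pi> N A J \<le> a / P" "overlap M \<pi> N A J \<le> b / Q"
    unfolding a_def b_def P_def Q_def using k_le ij by (auto intro!: overlap_le_ratio)
  then have "(overlap M \<pi> N A J)\<^sup>2 \<le> (a / P) * (b / Q)"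
    unfolding power2_eq_square by (intro mult_mono) auto
  also have "\<dots> = (a * b) / (P * Q)"
    unfolding P_def Q_def using dmass_finite dens_prob k_le
    by (intro ennreal_divide_times_divide) auto
  also have "a * b \<le> (\<integral>\<^sup>+ z \<in> A i. (\<integral>\<^sup>+ w \<in> A j.
            ennreal (min (\<pi> k z * \<pi> (Suc k) w) (\<pi> k w * \<pi> (Suc k) z)) \<partial>M) \<partial>M)"
    unfolding a_def b_def min.commute[of "\<pi> (Suc k) _"]
    using dens_meas dens_nonneg k_le A_sets ij by (intro swap_integral_ge_overlap_product) auto
  then have "(a * b) / (P * Q) \<le> \<dots> / (P * Q)"
    by (rule divide_right_mono_ennreal)
  finally show ?thesis unfolding P_def Q_def .
qed

end
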